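(* Let $n\ge1$ and let $\hat\pi$ be a linked cycle on $[n]$. Then in the marked linear representation of $\hat\pi$, the number of arcs plus the number of marks equals $n-1$.
   Context: Two finite sets of integers $E,F$ are nearly disjoint if for every $i\in E\cap F$ either ($i=\min(E)$, $|E|>1$, $i\ne\min(F)$) or ($i=\min(F)$, $|F|>1$, $i\ne\min(E)$). A linked partition of $[n]$ is a set of nonempty subsets (blocks) of $[n]$ with union $[n]$, any two distinct blocks nearly disjoint; each element lies in one or two blocks (singly/doubly covered). A linked cycle on $[n]$ is a linked partition of $[n]$ in which the elements of each block are arranged in a cycle; a cycle is written $(i_1i_2\dots i_t)$ with $i_1$ its minimum. The linear representation of $\hat\pi$: for each $i\in[n]$ create vertices as follows: if $i$ is singly covered and is the minimum of its cycle, which has $k+1$ elements, create $i^{(1)},\dots,i^{(k)}$ if $k\ge1$, and a single isolated vertex $i^{(1)}$ if $k=0$; if $i$ is singly covered and not the minimum of its cycle, create $i^{(0)}$; if $i$ is doubly covered and is the minimum of a cycle of size $k+1$, create $i^{(0)},i^{(1)},\dots,i^{(k)}$. Vertices are placed on a line ordered by $i$ and then by superscript. For each cycle $(i_1i_2\dots i_t)$ with $t\ge2$ draw the arcs $(i_1^{(j)},i_{t+1-j}^{(0)})$ for $j=1,\dots,t-1$. The marked linear representation additionally places a mark immediately before $i^{(1)}$ for each singly covered $i\neq1$ that is the minimum of its cycle. *)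

theory Defs
  imports Main
begin

definition nearly_disjoint :: "nat set \<Rightarrow> nat set \<Rightarrow> bool" where
  "nearly_disjoint E F \<longleftrightarrow>
     (\<forall>i \<in> E \<inter> F.
        (i = Min E \<and> card E > 1 \<and> i \<noteq> Min F) \<or>
        (i = Min F \<and> card F > 1 \<and> i \<noteq> Min E))"

definition linked_partition :: "nat \<Rightarrow> nat set set \<Rightarrow> bool" where
  "linked_partition n P \<longleftrightarrow>
     (\<forall>B \<in> P. B \<noteq> {}) \<and> \<Union>P = {1..n} \<and>
     (\<forall>E \<in> P. \<forall>F \<in> P. E \<noteq> F \<longrightarrow> nearly_disjoint E F)"

text \<open>A cycle is represented
  canonically by the list [i1, i2, ..., it] of its elements (distinct), starting with its
  minimum i1; distinct cycles have distinct underlying blocks, and the blocks form a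
  linked partition of [n].\<close>
definition linked_cycle :: "nat \<Rightarrow> nat list set \<Rightarrow> bool" where
  "linked_cycle n C \<longleftrightarrow>
     (\<forall>c \<in> C. c \<noteq> [] \<and> distinct c \<and> hd c = Min (set c)) \<and>
     inj_on set C \<and>
     linked_partition n (set ` C)"

definition covering_cycles :: "nat list set \<Rightarrow> nat \<Rightarrow> nat list set" where
  "covering_cycles C i = {c \<in> C. i \<in> set c}"

definition singly_covered :: "nat list set \<Rightarrow> nat \<Rightarrow> bool" where
  "singly_covered C i \<longleftrightarrow> card (covering_cycles C i) = 1"

definition doubly_covered :: "nat list set \<Rightarrow> nat \<Rightarrow> bool" where
  "doubly_covered C i \<longleftrightarrow> card (covering_cycles C i) = 2"

definition is_cycle_min :: "nat list set \<Rightarrow> nat \<Rightarrow> bool" where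
  "is_cycle_min C i \<longleftrightarrow> (\<exists>c \<in> C. hd c = i)"

text \<open>Vertices of the linear representation: vertex i^(s) is the pair (i, s).\<close>
definition lin_vertices :: "nat \<Rightarrow> nat list set \<Rightarrow> (nat \<times> nat) set" where
  "lin_vertices n C =
     {(i, s) | i s c. i \<in> {1..n} \<and> singly_covered C i \<and> c \<in> C \<and> hd c = i \<and>
                     1 \<le> s \<and> s \<le> max 1 (length c - 1)}
   \<union> {(i, 0) | i. i \<in> {1..n} \<and> singly_covered C i \<and> \<not> is_cycle_min C i}
   \<union> {(i, s) | i s c. i \<in> {1..n} \<and> doubly_covered C i \<and> c \<in> C \<and> hd c = i \<and>
                     s \<le> length c - 1}"

text \<open>Arcs: for each cycle (i1 ... it) with t \<ge> 2, the arcs (i1^(j), i_(t+1-j)^(0)),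
  j = 1..t-1 (list indices are 0-based, so i_(t+1-j) = c ! (t - j)).\<close>
definition lin_arcs :: "nat list set \<Rightarrow> ((nat \<times> nat) \<times> (nat \<times> nat)) set" where
  "lin_arcs C =
     {((hd c, j), (c ! (length c - j), 0)) | c j.
        c \<in> C \<and> 2 \<le> length c \<and> 1 \<le> j \<and> j \<le> length c - 1}"

text \<open>Marks: one mark (immediately before i^(1)) for each singly covered i \<noteq> 1
  that is the minimum of its cycle; we identify a mark with its element i.\<close>
definition lin_marks :: "nat \<Rightarrow> nat list set \<Rightarrow> nat set" where
  "lin_marks n C = {i \<in> {1..n}. i \<noteq> 1 \<and> singly_covered C i \<and> is_cycle_min C i}"

end

theory Submission
  imports Defs
begin

text \<open>A cycle c carries length c - 1 arcs, so arcs plus cycles count the total length of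
  the cycles, which by double counting is n + D, with D the number of doubly covered elements.
  Near disjointness makes a cycle determined by its minimum and every doubly covered element a
  cycle minimum, so there are D + S cycles, S being the number of singly covered cycle minima.
  The marks are these S minima other than 1, and 1 is one of them since it is the minimum of
  every cycle containing it. Hence arcs plus marks number (n + D - (D + S)) + (S - 1) = n - 1.\<close>

definition doubly_covered_elems :: "nat \<Rightarrow> nat list set \<Rightarrow> nat set" where
  "doubly_covered_elems n C = {i \<in> {1..n}. doubly_covered C i}"

definition singly_covered_mins :: "nat \<Rightarrow> nat list set \<Rightarrow> nat set" where
  "singly_covered_mins n C = {i \<in> {1..n}. singly_covered C i \<and> is_cycle_min C i}"

definition cycle_arcs :: "nat list \<Rightarrow> ((nat \<times> nat) \<times> (nat \<times> nat)) set" where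
  "cycle_arcs c = (\<lambda>j. ((hd c, j), (c ! (length c - j), 0))) ` {1..length c - 1}"

lemma lin_arcs_eq_UN_cycle_arcs: "lin_arcs C = (\<Union>c\<in>C. cycle_arcs c)"
  unfolding lin_arcs_def cycle_arcs_def by (auto, force)

lemma card_cycle_arcs: "card (cycle_arcs c) = length c - 1"
proof -
  have "inj_on (\<lambda>j. ((hd c, j), (c ! (length c - j), 0::nat))) {1..length c - 1}"
    by (auto intro: inj_onI)
  thus ?thesis unfolding cycle_arcs_def by (simp add: card_image)
qed

lemma card_lin_arcs:
  assumes "finite C" and "inj_on hd C"
  shows "card (lin_arcs C) = (\<Sum>c\<in>C. length c - 1)"
proof -
  have "card (\<Union>c\<in>C. cycle_arcs c) = (\<Sum>c\<in>C. card (cycle_arcs c))"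
  proof (rule card_UN_disjoint[OF \<open>finite C\<close>])
    show "\<forall>c\<in>C. finite (cycle_arcs c)" unfolding cycle_arcs_def by auto
    show "\<forall>c\<in>C. \<forall>d\<in>C. c \<noteq> d \<longrightarrow> cycle_arcs c \<inter> cycle_arcs d = {}"
      using \<open>inj_on hd C\<close> unfolding cycle_arcs_def by (auto dest: inj_onD)
  qed
  thus ?thesis by (simp add: lin_arcs_eq_UN_cycle_arcs card_cycle_arcs)
qed

lemma sum_length_minus_one_plus_card:
  assumes "[] \<notin> C"
  shows "(\<Sum>c\<in>C. length c - 1) + card C = (\<Sum>c\<in>C. length c)"
proof -
  have "(\<Sum>c\<in>C. length c - 1 + 1) = (\<Sum>c\<in>C. length c - 1) + (\<Sum>c\<in>C. 1)"
    by (rule sum.distrib)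
  hence "(\<Sum>c\<in>C. length c - 1) + card C = (\<Sum>c\<in>C. length c - 1 + 1)"
    by simp
  also have "\<dots> = (\<Sum>c\<in>C. length c)"
    using assms by (intro sum.cong refl) (metis Suc_pred' add.commute length_greater_0_conv plus_1_eq_Suc)
  finally show ?thesis .
qed

lemma sum_length_eq_sum_card_covering_cycles:
  assumes "finite C" "finite A" and "\<And>c. c \<in> C \<Longrightarrow> distinct c \<and> set c \<subseteq> A"
  shows "(\<Sum>c\<in>C. length c) = (\<Sum>i\<in>A. card (covering_cycles C i))"
proof -
  have "(\<Sum>c\<in>C. length c) = (\<Sum>c\<in>C. \<Sum>i\<in>A. if i \<in> set c then 1 else 0)"
  proof (intro sum.cong refl)
    fix c assume "c \<in> C"
    have "length c = card (set c)"
      using assms(3)[OF \<open>c \<in> C\<close>] by (simp add: distinct_card)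
    also have "set c = {i \<in> A. i \<in> set c}" using assms(3)[OF \<open>c \<in> C\<close>] by auto
    also have "card \<dots> = (\<Sum>i\<in>A. if i \<in> set c then 1 else 0)"
      unfolding card_eq_sum by (rule sum.inter_filter[OF \<open>finite A\<close>])
    finally show "length c = (\<Sum>i\<in>A. if i \<in> set c then 1 else 0)" .
  qed
  also have "\<dots> = (\<Sum>i\<in>A. \<Sum>c\<in>C. if i \<in> set c then 1 else 0)"
    by (rule sum.swap)
  also have "\<dots> = (\<Sum>i\<in>A. card (covering_cycles C i))"
    unfolding covering_cycles_def card_eq_sum
    by (intro sum.cong refl sum.inter_filter[symmetric] \<open>finite C\<close>)
  finally show ?thesis .
qed

lemma card_covering_cycles_le:
  "card (covering_cycles C i)
     \<le> card {c \<in> covering_cycles C i. hd c \<noteq> i} + card {c \<in> covering_cycles C i. hd c = i}"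
proof -
  have "covering_cycles C i
      = {c \<in> covering_cycles C i. hd c \<noteq> i} \<union> {c \<in> covering_cycles C i. hd c = i}"
    by auto
  thus ?thesis by (metis card_Un_le)
qed

context
  fixes n :: nat and C :: "nat list set"
  assumes lc: "linked_cycle n C"
begin

lemma linked_cycle_cycle:
  assumes "c \<in> C"
  shows "c \<noteq> []" and "distinct c" and "hd c = Min (set c)"
  using lc assms unfolding linked_cycle_def by blast+

lemma linked_cycle_hd_in_set:
  assumes "c \<in> C"
  shows "hd c \<in> set c"
  using linked_cycle_cycle[OF assms] by simp

lemma linked_cycle_set_subset:
  assumes "c \<in> C"
  shows "set c \<subseteq> {1..n}"
  using lc assms unfolding linked_cycle_def linked_partition_def by blast

lemma linked_cycle_covers:
  assumes "i \<in> {1..n}"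
  obtains c where "c \<in> C" and "i \<in> set c"
  using lc assms unfolding linked_cycle_def linked_partition_def by blast

lemma linked_cycle_finite: "finite C"
proof -
  have "set ` C \<subseteq> Pow {1..n}" using linked_cycle_set_subset by blast
  hence "finite (set ` C)" by (rule finite_subset) simp
  moreover have "inj_on set C" using lc unfolding linked_cycle_def by blast
  ultimately show ?thesis by (rule finite_imageD)
qed

lemma linked_cycle_nearly_disjoint:
  assumes "c \<in> C" "d \<in> C" "c \<noteq> d"
  shows "nearly_disjoint (set c) (set d)"
proof -
  have "set c \<noteq> set d"
    using lc assms unfolding linked_cycle_def by (meson inj_onD)
  thus ?thesis using lc assms unfolding linked_cycle_def linked_partition_def by blast
qed

lemma linked_cycle_common_elem_is_hd:
  assumes "c \<in> C" "d \<in> C" "c \<noteq> d" "i \<in> set c" "i \<in> set d"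
  shows "i = hd c \<or> i = hd d"
  using linked_cycle_nearly_disjoint[OF assms(1-3)] assms(4,5)
    linked_cycle_cycle(3)[OF assms(1)] linked_cycle_cycle(3)[OF assms(2)]
  unfolding nearly_disjoint_def by auto

text \<open>Two cycles with the same minimum m would share m, but near disjointness forbids a common
  element that is the minimum of both.\<close>
lemma linked_cycle_inj_on_hd: "inj_on hd C"
proof (rule inj_onI, rule ccontr)
  fix c d assume "c \<in> C" "d \<in> C" "hd c = hd d" "c \<noteq> d"
  then show False
    using linked_cycle_nearly_disjoint[OF \<open>c \<in> C\<close> \<open>d \<in> C\<close> \<open>c \<noteq> d\<close>]
      linked_cycle_hd_in_set[OF \<open>c \<in> C\<close>] linked_cycle_hd_in_set[OF \<open>d \<in> C\<close>]
      linked_cycle_cycle(3)[OF \<open>c \<in> C\<close>] linked_cycle_cycle(3)[OF \<open>d \<in> C\<close>]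
    unfolding nearly_disjoint_def by auto
qed

lemma finite_covering_cycles: "finite (covering_cycles C i)"
  using linked_cycle_finite unfolding covering_cycles_def by simp

lemma card_covering_cycles_not_hd_le_1: "card {c \<in> covering_cycles C i. hd c \<noteq> i} \<le> 1"
  using linked_cycle_finite linked_cycle_common_elem_is_hd unfolding covering_cycles_def One_nat_def by (subst card_le_Suc0_iff_eq) auto

lemma card_covering_cycles_hd_le_1: "card {c \<in> covering_cycles C i. hd c = i} \<le> 1"
  using linked_cycle_finite linked_cycle_inj_on_hd unfolding covering_cycles_def One_nat_def by (subst card_le_Suc0_iff_eq) (auto dest: inj_onD)

lemma card_covering_cycles_le_2: "card (covering_cycles C i) \<le> 2"
  using card_covering_cycles_le[of C i] card_covering_cycles_not_hd_le_1[of i]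
    card_covering_cycles_hd_le_1[of i] by linarith

lemma card_covering_cycles_ge_1:
  assumes "i \<in> {1..n}"
  shows "card (covering_cycles C i) \<ge> 1"
proof -
  obtain c where "c \<in> C" "i \<in> set c" using linked_cycle_covers[OF assms] .
  hence "covering_cycles C i \<noteq> {}" unfolding covering_cycles_def by auto
  thus ?thesis using finite_covering_cycles by (simp add: Suc_le_eq card_gt_0_iff)
qed

lemma doubly_covered_is_cycle_min:
  assumes "doubly_covered C i"
  shows "is_cycle_min C i"
proof -
  have "card {c \<in> covering_cycles C i. hd c = i} \<noteq> 0"
    using assms card_covering_cycles_le[of C i] card_covering_cycles_not_hd_le_1[of i]
    unfolding doubly_covered_def by linarith
  hence "{c \<in> covering_cycles C i. hd c = i} \<noteq> {}" by (metis card.empty)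
  then obtain c where "c \<in> covering_cycles C i" "hd c = i" by blast
  thus ?thesis unfolding covering_cycles_def is_cycle_min_def by auto
qed

lemma sum_card_covering_cycles:
  "(\<Sum>i\<in>{1..n}. card (covering_cycles C i)) = n + card (doubly_covered_elems n C)"
proof -
  have "(\<Sum>i\<in>{1..n}. card (covering_cycles C i))
      = (\<Sum>i\<in>{1..n}. 1 + (if doubly_covered C i then 1 else 0))"
  proof (intro sum.cong refl)
    fix i :: nat assume "i \<in> {1..n}"
    then show "card (covering_cycles C i) = 1 + (if doubly_covered C i then 1 else 0)"
      using card_covering_cycles_ge_1 card_covering_cycles_le_2[of i]
      unfolding doubly_covered_def by fastforce
  qed
  also have "\<dots> = n + (\<Sum>i\<in>{1..n}. if doubly_covered C i then 1 else 0)"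
    by (simp only: sum.distrib) simp
  also have "(\<Sum>i\<in>{1..n}. if doubly_covered C i then 1 else 0) = card (doubly_covered_elems n C)"
    unfolding doubly_covered_elems_def card_eq_sum by (rule sum.inter_filter[symmetric]) simp
  finally show ?thesis .
qed

lemma one_in_singly_covered_mins:
  assumes "n \<ge> 1"
  shows "1 \<in> singly_covered_mins n C"
proof -
  have one: "1 \<in> {1..n}" using assms by simp
  have hd_eq_1: "hd c = 1" if "c \<in> C" "1 \<in> set c" for c
    using that linked_cycle_cycle(3)[OF \<open>c \<in> C\<close>] linked_cycle_hd_in_set[OF \<open>c \<in> C\<close>]
      linked_cycle_set_subset[OF \<open>c \<in> C\<close>]
    by (metis Min_le antisym atLeastAtMost_iff finite_set subsetD)
  hence "{c \<in> covering_cycles C 1. hd c \<noteq> 1} = {}" unfolding covering_cycles_def by auto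
  hence "card {c \<in> covering_cycles C 1. hd c \<noteq> 1} = 0" by (simp only: card.empty)
  hence "card (covering_cycles C 1) \<le> 1"
    using card_covering_cycles_le[of C 1] card_covering_cycles_hd_le_1[of 1] by linarith
  moreover have "card (covering_cycles C 1) \<ge> 1" by (rule card_covering_cycles_ge_1[OF one])
  moreover obtain c where "c \<in> C" "1 \<in> set c" using linked_cycle_covers[OF one] by blast
  ultimately show ?thesis
    using one hd_eq_1
    unfolding singly_covered_mins_def singly_covered_def is_cycle_min_def by force
qed

lemma hd_image_eq_cycle_mins:
  "hd ` C = doubly_covered_elems n C \<union> singly_covered_mins n C"
proof
  show "hd ` C \<subseteq> doubly_covered_elems n C \<union> singly_covered_mins n C"
  proof
    fix i assume "i \<in> hd ` C"
    then obtain c where "c \<in> C" "i = hd c" by auto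
    hence i: "i \<in> {1..n}"
      using linked_cycle_hd_in_set linked_cycle_set_subset by blast
    have "is_cycle_min C i" using \<open>c \<in> C\<close> \<open>i = hd c\<close> unfolding is_cycle_min_def by auto
    moreover have "singly_covered C i \<or> doubly_covered C i"
      using card_covering_cycles_ge_1[OF i] card_covering_cycles_le_2[of i]
      unfolding singly_covered_def doubly_covered_def by linarith
    ultimately show "i \<in> doubly_covered_elems n C \<union> singly_covered_mins n C"
      using i unfolding doubly_covered_elems_def singly_covered_mins_def by auto
  qed
  show "doubly_covered_elems n C \<union> singly_covered_mins n C \<subseteq> hd ` C"
    using doubly_covered_is_cycle_min
    unfolding doubly_covered_elems_def singly_covered_mins_def is_cycle_min_def by auto
qed

lemma card_linked_cycle:
  "card C = card (doubly_covered_elems n C) + card (singly_covered_mins n C)"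
proof -
  have "card C = card (hd ` C)" by (rule card_image[OF linked_cycle_inj_on_hd, symmetric])
  also have "\<dots> = card (doubly_covered_elems n C) + card (singly_covered_mins n C)"
    unfolding hd_image_eq_cycle_mins
    by (rule card_Un_disjoint)
      (auto simp: doubly_covered_elems_def singly_covered_mins_def
                  doubly_covered_def singly_covered_def)
  finally show ?thesis .
qed

lemma card_lin_arcs_plus_card_linked_cycle:
  "card (lin_arcs C) + card C = n + card (doubly_covered_elems n C)"
proof -
  have "card (lin_arcs C) + card C = (\<Sum>c\<in>C. length c)"
    using card_lin_arcs[OF linked_cycle_finite linked_cycle_inj_on_hd]
      sum_length_minus_one_plus_card linked_cycle_cycle(1)
    by auto
  also have "\<dots> = (\<Sum>i\<in>{1..n}. card (covering_cycles C i))"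
    using linked_cycle_finite linked_cycle_cycle(2) linked_cycle_set_subset
    by (intro sum_length_eq_sum_card_covering_cycles) auto
  also have "\<dots> = n + card (doubly_covered_elems n C)"
    by (rule sum_card_covering_cycles)
  finally show ?thesis .
qed

end

theorem proposition4p4:
  fixes n :: nat and C :: "nat list set"
  assumes "n \<ge> 1" and "linked_cycle n C"
  shows "card (lin_arcs C) + card (lin_marks n C) = n - 1"
proof -
  have "lin_marks n C = singly_covered_mins n C - {1}"
    unfolding lin_marks_def singly_covered_mins_def by auto
  moreover have "finite (singly_covered_mins n C)" by (simp add: singly_covered_mins_def)
  ultimately have "card (lin_marks n C) + 1 = card (singly_covered_mins n C)"
    using one_in_singly_covered_mins[OF assms(2,1)] by (metis card_Suc_Diff1 Suc_eq_plus1)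
  thus ?thesis
    using card_lin_arcs_plus_card_linked_cycle[OF assms(2)] card_linked_cycle[OF assms(2)]
    by linarith
qed

end
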